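(* Let $f\in\mathcal L^1_1([0,1])$ be such that $\ln(n)\cdot\widehat T_1^n(f)\to\int f\,\mathrm{d}\mu_1$ uniformly on $Y=[1/2,1]$ as $n\to\infty$. Then $\ln(n)\cdot\widehat T_1^n(f)\to\int f\,\mathrm d\mu_1$ uniformly on every compact subset of $(0,1]$.
   Context: $T_1$ is the Farey map with inverse branches $f_{1,0}(x)=\frac x{1+x}$, $f_{1,1}(x)=\frac1{1+x}$; $\mathcal P_1 f=|f_{1,0}'|\,f\circ f_{1,0}+|f_{1,1}'|\,f\circ f_{1,1}$; $\mu_1$ is the measure with density $h_1(x)=1/x$ and $\mathcal L^1_1([0,1])$ the $\mu_1$-integrable functions; $\widehat T_1(f)=\mathcal P_1(fh_1)/h_1$. *)

theory Defs
  imports "HOL-Analysis.Analysis"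
begin

text \<open>Inverse branches of the Farey map T_1.\<close>
definition f10 :: "real \<Rightarrow> real" where "f10 x = x / (1 + x)"
definition f11 :: "real \<Rightarrow> real" where "f11 x = 1 / (1 + x)"

definition P1 :: "(real \<Rightarrow> real) \<Rightarrow> real \<Rightarrow> real" where
  "P1 g x = \<bar>deriv f10 x\<bar> * g (f10 x) + \<bar>deriv f11 x\<bar> * g (f11 x)"

definition h1 :: "real \<Rightarrow> real" where "h1 x = 1 / x"

definition mu1 :: "real measure" where
  "mu1 = density lborel (\<lambda>x. ennreal (indicator {0..1} x * h1 x))"

definition T1hat :: "(real \<Rightarrow> real) \<Rightarrow> real \<Rightarrow> real" where
  "T1hat g x = P1 (\<lambda>y. g y * h1 y) x / h1 x"

end

theory Submission
  imports Defs "HOL-Real_Asymp.Real_Asymp"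
begin

(* On (0,1] the transfer operator is explicit:
     T1hat g y = g (y/(1+y)) / (1+y) + y/(1+y) * g (1/(1+y)).
   Evaluated at y = z/(1-z) this reads  T1hat g y = (1-z) g z + z g (1-z),
   so g z can be recovered from T1hat g at a point of [a,1] and g at 1-z,
   whenever z ranges over [a/(1+a), a] with 0 < a <= 1/2.  Applied to
   g = T1hat^n f, and using that ln n / ln (n+1) -> 1, uniform convergence
   of ln n * T1hat^n f on [a,1] propagates to [a/(1+a),1]
   (lemma uniform_limit_extend_left).  Iterating from [1/2,1] yields all
   intervals [1/(k+2),1], and every compact subset of (0,1] lies in one of
   them. *)

lemma deriv_f10: "y > 0 \<Longrightarrow> deriv f10 y = 1 / (1 + y)^2"
proof -
  assume y: "y > 0"
  have "(f10 has_real_derivative ((1 * (1 + y) - y * 1) / ((1 + y) * (1 + y)))) (at y)"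
    unfolding f10_def[abs_def] using y by (intro derivative_eq_intros) auto
  then show ?thesis using DERIV_imp_deriv by (simp add: power2_eq_square)
qed

lemma deriv_f11: "y > 0 \<Longrightarrow> deriv f11 y = -1 / (1 + y)^2"
proof -
  assume y: "y > 0"
  have "(f11 has_real_derivative (- (1 * 1) / ((1 + y) * (1 + y)))) (at y)"
    unfolding f11_def[abs_def] using y
    by (intro derivative_eq_intros) (auto simp: power2_eq_square)
  then show ?thesis using DERIV_imp_deriv by (simp add: power2_eq_square)
qed

lemma T1hat_eq:
  assumes "y > 0"
  shows "T1hat g y = g (y / (1 + y)) / (1 + y) + y / (1 + y) * g (1 / (1 + y))"
proof -
  have ne: "1 + y \<noteq> 0" "y \<noteq> 0" using assms by auto
  have "T1hat g y = y * (1 / (1 + y)^2 * (g (y / (1 + y)) * ((1 + y) / y))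
                       + 1 / (1 + y)^2 * (g (1 / (1 + y)) * (1 + y)))"
    unfolding T1hat_def P1_def h1_def using assms
    by (simp add: deriv_f10 deriv_f11 f10_def f11_def)
  also have "\<dots> = y * (1 / (1 + y)^2 * (g (y / (1 + y)) * ((1 + y) / y)))
                  + y * (1 / (1 + y)^2 * (g (1 / (1 + y)) * (1 + y)))"
    by (rule distrib_left)
  also have "y * (1 / (1 + y)^2 * (g (y / (1 + y)) * ((1 + y) / y))) = g (y / (1 + y)) / (1 + y)"
    using ne by (simp add: power2_eq_square)
  also have "y * (1 / (1 + y)^2 * (g (1 / (1 + y)) * (1 + y))) = y / (1 + y) * g (1 / (1 + y))"
    using ne by (simp add: power2_eq_square)
  finally show ?thesis .
qed

text \<open>The same formula at the point y = z/(1-z): both inverse branches land in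
  z and 1-z, which is what makes the backward recursion possible.\<close>
lemma T1hat_at_preimage:
  assumes "0 < z" "z < 1"
  shows "T1hat g (z / (1 - z)) = (1 - z) * g z + z * g (1 - z)"
proof -
  have y: "z / (1 - z) > 0" using assms by simp
  have image0: "z / (1 - z) / (1 + z / (1 - z)) = z"
    and image1: "1 / (1 + z / (1 - z)) = 1 - z"
    using assms by (simp_all add: field_simps)
  have "T1hat g (z / (1 - z)) = g (z / (1 - z) / (1 + z / (1 - z))) * (1 / (1 + z / (1 - z)))
          + z / (1 - z) / (1 + z / (1 - z)) * g (1 / (1 + z / (1 - z)))"
    using T1hat_eq[OF y, of g] by (simp only: times_divide_eq_right mult_1_right)
  then show ?thesis by (simp only: image0 image1 mult.commute)
qed

lemma uniform_limit_const_seq: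
  fixes r :: "'a \<Rightarrow> 'b::metric_space"
  assumes "(r \<longlongrightarrow> l) F"
  shows "uniform_limit S (\<lambda>n x. r n) (\<lambda>x. l) F"
  using assms by (simp add: uniform_limit_iff tendsto_iff)

lemma ln_ratio_tendsto_1: "(\<lambda>n. ln (real n) / ln (real (Suc n))) \<longlonglongrightarrow> 1"
  by real_asymp

text \<open>Uniform convergence of ln n * g n is not affected by shifting g by one step,
  since ln n and ln (n+1) are asymptotically equal.\<close>
lemma uniform_limit_ln_shift:
  fixes g :: "nat \<Rightarrow> 'a \<Rightarrow> real"
  assumes "uniform_limit S (\<lambda>n x. ln (real n) * g n x) (\<lambda>x. c) sequentially"
  shows "uniform_limit S (\<lambda>n x. ln (real n) * g (Suc n) x) (\<lambda>x. c) sequentially"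
proof -
  define r where "r n = ln (real n) / ln (real (Suc n))" for n
  have shifted: "uniform_limit S (\<lambda>n x. ln (real (Suc n)) * g (Suc n) x) (\<lambda>x. c) sequentially"
    using filterlim_sequentially_Suc[of "\<lambda>n x. ln (real n) * g n x"] assms by simp
  have "uniform_limit S (\<lambda>n x. r n * (ln (real (Suc n)) * g (Suc n) x)) (\<lambda>x. 1 * c) sequentially"
    using ln_ratio_tendsto_1 unfolding r_def[symmetric]
    by (intro uniform_lim_mult uniform_limit_const_seq shifted) (auto simp: bounded_iff)
  moreover have "r n * ln (real (Suc n)) = ln (real n)" for n
    by (cases n) (auto simp: r_def)
  ultimately show ?thesis by (simp add: mult.assoc[symmetric])
qed

definition log_orbit :: "(real \<Rightarrow> real) \<Rightarrow> nat \<Rightarrow> real \<Rightarrow> real" where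
  "log_orbit f n x = ln (real n) * (T1hat ^^ n) f x"

text \<open>On [a/(1+a), a], the value of log_orbit f n at z is an affine combination,
  with bounded coefficients, of the shifted orbit at z/(1-z) and of log_orbit f n
  at 1-z; both points lie in [a,1].\<close>
lemma log_orbit_backward:
  assumes "0 < z" "z < 1"
  shows "log_orbit f n z =
    (ln (real n) * (T1hat ^^ Suc n) f (z / (1 - z)) - z * log_orbit f n (1 - z)) / (1 - z)"
proof -
  have "ln (real n) * (T1hat ^^ Suc n) f (z / (1 - z))
          = ln (real n) * ((1 - z) * (T1hat ^^ n) f z + z * (T1hat ^^ n) f (1 - z))"
    by (simp add: T1hat_at_preimage assms)
  also have "\<dots> = (1 - z) * log_orbit f n z + z * log_orbit f n (1 - z)"
    by (simp add: log_orbit_def algebra_simps)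
  finally show ?thesis using assms by (simp add: field_simps)
qed

lemma uniform_limit_extend_left:
  assumes a: "0 < a" "a \<le> 1/2"
    and conv: "uniform_limit {a..1} (log_orbit f) (\<lambda>x. c) sequentially"
  shows "uniform_limit {a/(1+a)..1} (log_orbit f) (\<lambda>x. c) sequentially"
proof -
  define S where "S = {a/(1+a)..a}"
  have S_lower: "0 < a/(1+a)" and S_upper: "a/(1+a) \<le> a" using a by (simp_all add: field_simps)
  have S_pos: "0 < z \<and> z \<le> 1/2" if "z \<in> S" for z
  proof -
    have "a/(1+a) \<le> z" "z \<le> a" using that unfolding S_def atLeastAtMost_iff by blast+
    then show ?thesis using S_lower a by linarith
  qed
  have preimage_in: "(\<lambda>z. z / (1 - z)) \<in> S \<rightarrow> {a..1}"
    using a by (auto simp: S_def field_simps)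
  have reflect_in: "(\<lambda>z. 1 - z) \<in> S \<rightarrow> {a..1}"
  proof
    fix z assume "z \<in> S"
    with S_pos[of z] a show "1 - z \<in> {a..1}" by auto
  qed
  have "uniform_limit {a..1} (\<lambda>n y. ln (real n) * (T1hat ^^ Suc n) f y) (\<lambda>y. c) sequentially"
    using uniform_limit_ln_shift[where S = "{a..1}" and g = "\<lambda>n. (T1hat ^^ n) f"] conv
    by (simp add: log_orbit_def[abs_def])
  then have shifted: "uniform_limit S
      (\<lambda>n z. ln (real n) * (T1hat ^^ Suc n) f (z / (1 - z))) (\<lambda>z. c) sequentially"
    by (rule uniform_limit_compose'[OF _ preimage_in])
  have reflected: "uniform_limit S (\<lambda>n z. log_orbit f n (1 - z)) (\<lambda>z. c) sequentially"
    using uniform_limit_compose'[OF conv reflect_in] .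
  have bounded_S: "bounded ((\<lambda>z. z) ` S)" by (simp add: S_def)
  have bounded_limit: "bounded ((\<lambda>z. c - z * c) ` S)"
    by (intro compact_imp_bounded compact_continuous_image continuous_intros) (simp add: S_def)
  have denominator: "1/2 \<le> norm (1 - z)" if "z \<in> S" for z
    using S_pos[OF that] by simp
  have combination: "uniform_limit S
      (\<lambda>n z. (ln (real n) * (T1hat ^^ Suc n) f (z / (1 - z)) - z * log_orbit f n (1 - z)) / (1 - z))
      (\<lambda>z. (c - z * c) / (1 - z)) sequentially"
    by (intro uniform_lim_divide[where b = "1/2"] uniform_limit_minus uniform_lim_mult
          shifted reflected uniform_limit_const bounded_S bounded_limit denominator)
       (auto simp: bounded_iff)
  have "uniform_limit S (log_orbit f) (\<lambda>z. c) sequentially \<longleftrightarrow> uniform_limit S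
      (\<lambda>n z. (ln (real n) * (T1hat ^^ Suc n) f (z / (1 - z)) - z * log_orbit f n (1 - z)) / (1 - z))
      (\<lambda>z. (c - z * c) / (1 - z)) sequentially"
  proof (rule uniform_limit_cong')
    fix n z assume "z \<in> S"
    then show "log_orbit f n z =
        (ln (real n) * (T1hat ^^ Suc n) f (z / (1 - z)) - z * log_orbit f n (1 - z)) / (1 - z)"
      using S_pos[of z] by (intro log_orbit_backward) auto
  next
    fix z assume "z \<in> S"
    then show "c = (c - z * c) / (1 - z)" using S_pos[of z] by (auto simp: field_simps)
  qed
  with combination have "uniform_limit S (log_orbit f) (\<lambda>z. c) sequentially" by blast
  moreover have "S \<union> {a..1} = {a/(1+a)..1}" using S_upper a unfolding S_def by auto
  ultimately show ?thesis using uniform_limit_on_Un[OF _ conv] by metis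
qed

lemma uniform_limit_on_intervals:
  assumes "uniform_limit {1/2..1} (log_orbit f) (\<lambda>x. c) sequentially"
  shows "uniform_limit {1/(real k + 2)..1} (log_orbit f) (\<lambda>x. c) sequentially"
proof (induction k)
  case 0
  then show ?case using assms by simp
next
  case (Suc k)
  define a where "a = 1/(real k + 2)"
  have "0 < a" "a \<le> 1/2" by (auto simp: a_def field_simps)
  moreover have "1/(real (Suc k) + 2) = a/(1+a)" by (simp add: a_def field_simps)
  ultimately show ?case using uniform_limit_extend_left Suc.IH unfolding a_def by metis
qed

lemma compact_subset_interval:
  fixes K :: "real set"
  assumes "compact K" "K \<subseteq> {0<..1}"
  obtains k :: nat where "K \<subseteq> {1/(real k + 2)..1}"
proof (cases "K = {}")
  case False
  obtain m where m: "m \<in> K" "\<forall>x\<in>K. m \<le> x"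
    using compact_attains_inf[OF assms(1) False] by blast
  have "m > 0" using m assms(2) by auto
  obtain k :: nat where k: "1/m < real k" using reals_Archimedean2 by blast
  have "1/(real k + 2) \<le> m" using k \<open>m > 0\<close> by (simp add: field_simps)
  have "K \<subseteq> {1/(real k + 2)..1}"
  proof
    fix x assume "x \<in> K"
    then have "m \<le> x" "x \<le> 1" using m assms(2) by auto
    with \<open>1/(real k + 2) \<le> m\<close> show "x \<in> {1/(real k + 2)..1}" by simp
  qed
  then show ?thesis by (rule that)
qed auto

theorem theorem4p15:
  fixes f :: "real \<Rightarrow> real"
  assumes "integrable mu1 f"
    and "uniform_limit {1/2..1} (\<lambda>n x. ln (real n) * (T1hat ^^ n) f x)
           (\<lambda>x. integral\<^sup>L mu1 f) sequentially"
  shows "\<forall>K. compact K \<and> K \<subseteq> {0<..1} \<longrightarrow>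
           uniform_limit K (\<lambda>n x. ln (real n) * (T1hat ^^ n) f x)
             (\<lambda>x. integral\<^sup>L mu1 f) sequentially"
proof (intro allI impI)
  fix K :: "real set"
  assume K: "compact K \<and> K \<subseteq> {0<..1}"
  then obtain k :: nat where sub: "K \<subseteq> {1/(real k + 2)..1}"
    using compact_subset_interval by blast
  have "uniform_limit {1/(real k + 2)..1} (log_orbit f) (\<lambda>x. integral\<^sup>L mu1 f) sequentially"
    using uniform_limit_on_intervals assms(2) unfolding log_orbit_def[abs_def] by blast
  then show "uniform_limit K (\<lambda>n x. ln (real n) * (T1hat ^^ n) f x)
               (\<lambda>x. integral\<^sup>L mu1 f) sequentially"
    using uniform_limit_on_subset[OF _ sub] unfolding log_orbit_def[abs_def] by blast
qed

end
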